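(* Let $n\ge 2$ and let $e_1,\dots,e_n$ be the standard basis vectors of $\mathbb{C}^n$; write $\iota=\sqrt{-1}$. For each $s$, $rank_{cps}(e_s\otimes e_s\otimes e_s\otimes e_s)=1$. For $s\neq t$, the tensor $\mathcal{E}^{sstt}:=e_s\otimes e_s\otimes e_t\otimes e_t+e_t\otimes e_t\otimes e_s\otimes e_s$ satisfies $rank_{cps}(\mathcal{E}^{sstt})=4$, and \[ \mathcal{E}^{sstt}=\tfrac14\Big[(e_s+e_t)^{\otimes 4}+(e_s-e_t)^{\otimes 4}-(e_s+\iota e_t)^{\otimes 2}\otimes(e_s-\iota e_t)^{\otimes 2}-(e_s-\iota e_t)^{\otimes 2}\otimes(e_s+\iota e_t)^{\otimes 2}\Big] \] is a CPS rank decomposition of it.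
   Context: A tensor $\mathcal{A}\in\mathbb{C}^{n\times n\times n\times n}$ is conjugate partial-symmetric (CPS) if $\mathcal{A}_{ijkl}=\overline{\mathcal{A}_{klij}}$ and $\mathcal{A}_{ijkl}=\mathcal{A}_{jikl}=\mathcal{A}_{ijlk}$ for all indices. Every CPS tensor can be written as $\mathcal{A}=\sum_{i=1}^r\lambda_i a_i\otimes a_i\otimes\bar a_i\otimes\bar a_i$ with $\lambda_i\in\mathbb{R}$, $a_i\in\mathbb{C}^n$ (a CPS decomposition); the smallest such $r$ is the CPS rank $rank_{cps}(\mathcal{A})$, and a CPS decomposition with $r=rank_{cps}(\mathcal{A})$ terms is a CPS rank decomposition. Here $(u\otimes v\otimes w\otimes z)_{ijkl}=u_iv_jw_kz_l$ and $x^{\otimes d}$ is the $d$-fold tensor product of $x$ with itself. *)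

theory Defs
  imports "HOL-Analysis.Analysis"
begin

text \<open>Fourth-order tensors over \<open>\<complex>^n\<close>, with the index set given by a finite type \<open>'n\<close>
  (n = CARD('n)).\<close>
type_synonym ('n) tensor4 = "'n \<Rightarrow> 'n \<Rightarrow> 'n \<Rightarrow> 'n \<Rightarrow> complex"

definition outer4 :: "complex^'n \<Rightarrow> complex^'n \<Rightarrow> complex^'n \<Rightarrow> complex^'n \<Rightarrow> ('n::finite) tensor4" where
  "outer4 u v w z = (\<lambda>i j k l. u$i * v$j * w$k * z$l)"

definition cvec_cnj :: "complex^'n \<Rightarrow> complex^'n" where
  "cvec_cnj a = (\<chi> i. cnj (a$i))"

definition is_cps :: "('n::finite) tensor4 \<Rightarrow> bool" where
  "is_cps A \<longleftrightarrow> (\<forall>i j k l. A i j k l = cnj (A k l i j) \<and> A i j k l = A j i k l \<and> A i j k l = A i j l k)"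

definition cps_sum :: "(nat \<Rightarrow> real) \<Rightarrow> (nat \<Rightarrow> complex^'n) \<Rightarrow> nat \<Rightarrow> ('n::finite) tensor4" where
  "cps_sum lam a r = (\<lambda>i j k l. \<Sum>m<r. complex_of_real (lam m) *
      outer4 (a m) (a m) (cvec_cnj (a m)) (cvec_cnj (a m)) i j k l)"

definition has_cps_decomp :: "('n::finite) tensor4 \<Rightarrow> nat \<Rightarrow> bool" where
  "has_cps_decomp A r \<longleftrightarrow> (\<exists>lam a. A = cps_sum lam a r)"

definition cps_rank :: "('n::finite) tensor4 \<Rightarrow> nat" where
  "cps_rank A = (LEAST r. has_cps_decomp A r)"

definition is_cps_rank_decomp :: "('n::finite) tensor4 \<Rightarrow> (nat \<Rightarrow> real) \<Rightarrow> (nat \<Rightarrow> complex^'n) \<Rightarrow> nat \<Rightarrow> bool" where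
  "is_cps_rank_decomp A lam a r \<longleftrightarrow> A = cps_sum lam a r \<and> r = cps_rank A"

definition tadd :: "('n::finite) tensor4 \<Rightarrow> ('n::finite) tensor4 \<Rightarrow> ('n::finite) tensor4" where
  "tadd A B = (\<lambda>i j k l. A i j k l + B i j k l)"

definition tscale :: "complex \<Rightarrow> ('n::finite) tensor4 \<Rightarrow> ('n::finite) tensor4" where
  "tscale c A = (\<lambda>i j k l. c * A i j k l)"

definition pow4 :: "complex^'n \<Rightarrow> ('n::finite) tensor4" where
  "pow4 x = outer4 x x x x"

definition pow22 :: "complex^'n \<Rightarrow> complex^'n \<Rightarrow> ('n::finite) tensor4" where
  "pow22 x y = outer4 x x y y"

end

theory Submission
  imports Defs
begin

(*
  Pairing a fourth-order tensor A with a matrix X gives the Hermitian form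
  sum A_ijkl X_ij cnj(X_kl).  For a CPS decomposition with coefficients lam_m and vectors a_m
  it equals sum lam_m |a_m^T X a_m|^2, while for E^{sstt} it equals 2 Re(X_ss cnj(X_tt)).
  With at most three terms two coefficients share a sign, so up to an overall sign the form
  is bounded above by a single term lam_k |a_k^T X a_k|^2.  On matrices supported on the
  entries ss, st, tt this is impossible: either the linear form a_k^T X a_k has a zero where
  Re(X_ss cnj(X_tt)) > 0, or it ignores X_ss or X_tt, and then Re(X_ss cnj(X_tt)) is
  unbounded.  The explicit four-term decomposition supplies the matching upper bound.
*)

lemma sum_sum_mult_sum_sum:
  fixes f g :: "'a \<Rightarrow> 'b \<Rightarrow> 'c::comm_semiring_0"
  shows "(\<Sum>i\<in>A. \<Sum>j\<in>B. f i j) * (\<Sum>k\<in>C. \<Sum>l\<in>D. g k l) = (\<Sum>i\<in>A. \<Sum>j\<in>B. \<Sum>k\<in>C. \<Sum>l\<in>D. f i j * g k l)"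
  by (simp only: sum_distrib_right) (simp only: sum_distrib_left)

lemma three_reals_two_share_sign:
  fixes lam :: "nat \<Rightarrow> real"
  obtains k where "k < 3" "(\<forall>m<3. m \<noteq> k \<longrightarrow> lam m \<le> 0) \<or> (\<forall>m<3. m \<noteq> k \<longrightarrow> 0 \<le> lam m)"
proof -
  have less_3: "m < 3 \<longleftrightarrow> m = 0 \<or> m = 1 \<or> m = 2" for m :: nat
    by auto
  have "(0 \<le> lam 1 \<longleftrightarrow> 0 \<le> lam 2) \<or> (0 \<le> lam 0 \<longleftrightarrow> 0 \<le> lam 2) \<or> (0 \<le> lam 0 \<longleftrightarrow> 0 \<le> lam 1)"
    by blast
  then show ?thesis
    using that[of 0] that[of 1] that[of 2] unfolding less_3 by force
qed

lemma Re_mult_cnj_not_dominated_by_rank_one: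
  fixes \<alpha> \<beta> :: complex and c L :: real
  assumes "c \<noteq> 0"
  obtains x w y where "L * (cmod (\<alpha>\<^sup>2 * x + \<alpha> * \<beta> * w + \<beta>\<^sup>2 * y))\<^sup>2 < c * Re (x * cnj y)"
proof (cases "\<alpha> * \<beta> = 0")
  case False
  define w where "w = - (\<alpha>\<^sup>2 + \<beta>\<^sup>2 * of_real c) / (\<alpha> * \<beta>)"
  have "\<alpha>\<^sup>2 * 1 + \<alpha> * \<beta> * w + \<beta>\<^sup>2 * of_real c = 0"
    using False unfolding w_def by (simp add: field_simps)
  moreover have "0 < c * Re (1 * cnj (of_real c))"
    using assms by (auto simp add: zero_less_mult_iff linorder_neq_iff)
  ultimately show ?thesis using that[of 1 w "of_real c"] by simp
next
  case True
  text \<open>The linear form ignores \<open>x\<close> or \<open>y\<close>, so \<open>Re (x * cnj y)\<close> can be made arbitrarily large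
    while the left-hand side stays fixed.\<close>
  define C where "C = \<bar>L\<bar> * ((cmod (\<alpha>\<^sup>2 * of_real c))\<^sup>2 + (cmod (\<beta>\<^sup>2 * of_real c))\<^sup>2) + 1"
  define u where "u = C / c\<^sup>2"
  have cu: "c * (u * c) = C"
    using assms unfolding u_def by (simp add: power2_eq_square)
  have bound: "L * (cmod (\<gamma>\<^sup>2 * of_real c))\<^sup>2 < C" if "\<gamma> = \<alpha> \<or> \<gamma> = \<beta>" for \<gamma>
  proof -
    have "L * (cmod (\<gamma>\<^sup>2 * of_real c))\<^sup>2 \<le> \<bar>L\<bar> * ((cmod (\<alpha>\<^sup>2 * of_real c))\<^sup>2 + (cmod (\<beta>\<^sup>2 * of_real c))\<^sup>2)"
      using that by (auto intro!: mult_mono)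
    then show ?thesis unfolding C_def by linarith
  qed
  from True consider "\<alpha> = 0" | "\<beta> = 0" by auto
  then show ?thesis
  proof cases
    case 1
    then show ?thesis using that[of "of_real u" 0 "of_real c"] bound[of \<beta>] cu by (simp add: mult_ac)
  next
    case 2
    then show ?thesis using that[of "of_real c" 0 "of_real u"] bound[of \<alpha>] cu by (simp add: mult_ac)
  qed
qed

lemma rank_one_sum_one_positive_ne_Re_mult_cnj:
  fixes lam :: "nat \<Rightarrow> real" and \<alpha> \<beta> :: "nat \<Rightarrow> complex" and c :: real
  assumes "c \<noteq> 0" "k < r" and nonpos: "\<And>m. m < r \<Longrightarrow> m \<noteq> k \<Longrightarrow> lam m \<le> 0"
  obtains x w y where
    "(\<Sum>m<r. lam m * (cmod (\<alpha> m ^ 2 * x + \<alpha> m * \<beta> m * w + \<beta> m ^ 2 * y))\<^sup>2) \<noteq> c * Re (x * cnj y)"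
proof -
  define f where "f x w y m = lam m * (cmod (\<alpha> m ^ 2 * x + \<alpha> m * \<beta> m * w + \<beta> m ^ 2 * y))\<^sup>2" for x w y m
  obtain x w y where less: "f x w y k < c * Re (x * cnj y)"
    using Re_mult_cnj_not_dominated_by_rank_one[OF \<open>c \<noteq> 0\<close>] unfolding f_def by metis
  have "(\<Sum>m<r. f x w y m) = f x w y k + (\<Sum>m\<in>{..<r} - {k}. f x w y m)"
    using \<open>k < r\<close> by (simp add: sum.remove)
  also have "\<dots> \<le> f x w y k"
    using nonpos by (auto simp: f_def intro!: sum_nonpos mult_nonpos_nonneg)
  finally show ?thesis
    using that[of x w y] less unfolding f_def by fastforce
qed

lemma has_cps_decomp_mono:
  assumes "has_cps_decomp A r" "r \<le> r'"
  shows "has_cps_decomp A r'"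
proof -
  obtain lam a where A: "A = cps_sum lam a r"
    using assms(1) unfolding has_cps_decomp_def by blast
  have "cps_sum lam a r = cps_sum (\<lambda>m. if m < r then lam m else 0) a r'"
    unfolding cps_sum_def using assms(2) by (intro ext sum.mono_neutral_cong_left) auto
  then show ?thesis
    using A unfolding has_cps_decomp_def by blast
qed

lemma cps_rank_eqI:
  assumes "has_cps_decomp A r" and "0 < r \<Longrightarrow> \<not> has_cps_decomp A (r - 1)"
  shows "cps_rank A = r"
  unfolding cps_rank_def
proof (rule Least_equality)
  fix r' assume r': "has_cps_decomp A r'"
  show "r \<le> r'"
  proof (rule ccontr)
    assume "\<not> r \<le> r'"
    then have "0 < r" "r' \<le> r - 1" by auto
    then show False
      using assms(2) has_cps_decomp_mono[OF r'] by blast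
  qed
qed (fact assms(1))

lemma cps_rank_pow4:
  assumes "cvec_cnj x = x" "x \<noteq> 0"
  shows "cps_rank (pow4 x) = 1"
proof (rule cps_rank_eqI)
  show "has_cps_decomp (pow4 x) 1"
    unfolding has_cps_decomp_def cps_sum_def pow4_def
    by (rule exI[of _ "\<lambda>_. 1"], rule exI[of _ "\<lambda>_. x"]) (simp add: assms(1))
  obtain i where "x $ i \<noteq> 0"
    using assms(2) by (auto simp: vec_eq_iff)
  then have "pow4 x i i i i \<noteq> 0"
    by (simp add: pow4_def outer4_def)
  then show "\<not> has_cps_decomp (pow4 x) (1 - 1)"
    by (auto simp: has_cps_decomp_def cps_sum_def)
qed

lemma cps_sum_hermitian_form:
  fixes X :: "'n::finite \<Rightarrow> 'n \<Rightarrow> complex"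
  shows "(\<Sum>i\<in>UNIV. \<Sum>j\<in>UNIV. \<Sum>k\<in>UNIV. \<Sum>l\<in>UNIV. cps_sum lam a r i j k l * X i j * cnj (X k l))
    = of_real (\<Sum>m<r. lam m * (cmod (\<Sum>i\<in>UNIV. \<Sum>j\<in>UNIV. a m $ i * a m $ j * X i j))\<^sup>2)"
proof -
  have "(\<Sum>i\<in>UNIV. \<Sum>j\<in>UNIV. \<Sum>k\<in>UNIV. \<Sum>l\<in>UNIV. cps_sum lam a r i j k l * X i j * cnj (X k l))
      = (\<Sum>i\<in>UNIV. \<Sum>j\<in>UNIV. \<Sum>k\<in>UNIV. \<Sum>l\<in>UNIV. \<Sum>m<r.
           of_real (lam m) * ((a m $ i * a m $ j * X i j) * cnj (a m $ k * a m $ l * X k l)))"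
    unfolding cps_sum_def outer4_def cvec_cnj_def by (simp add: sum_distrib_left sum_distrib_right mult_ac)
  also have "\<dots> = (\<Sum>m<r. \<Sum>i\<in>UNIV. \<Sum>j\<in>UNIV. \<Sum>k\<in>UNIV. \<Sum>l\<in>UNIV.
           of_real (lam m) * ((a m $ i * a m $ j * X i j) * cnj (a m $ k * a m $ l * X k l)))"
    by (simp only: sum.swap[of _ _ "{..<r}"])
  also have "\<dots> = (\<Sum>m<r. of_real (lam m) * ((\<Sum>i\<in>UNIV. \<Sum>j\<in>UNIV. a m $ i * a m $ j * X i j) *
           cnj (\<Sum>k\<in>UNIV. \<Sum>l\<in>UNIV. a m $ k * a m $ l * X k l)))"
    by (simp only: cnj_sum sum_sum_mult_sum_sum) (simp only: sum_distrib_left)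
  also have "\<dots> = of_real (\<Sum>m<r. lam m * (cmod (\<Sum>i\<in>UNIV. \<Sum>j\<in>UNIV. a m $ i * a m $ j * X i j))\<^sup>2)"
    by (simp only: of_real_sum of_real_mult complex_norm_square)
  finally show ?thesis .
qed

lemma sum_outer4_axis:
  fixes F :: "'n::finite \<Rightarrow> 'n \<Rightarrow> 'n \<Rightarrow> 'n \<Rightarrow> complex"
  shows "(\<Sum>i\<in>UNIV. \<Sum>j\<in>UNIV. \<Sum>k\<in>UNIV. \<Sum>l\<in>UNIV.
      outer4 (axis p 1) (axis q 1) (axis u 1) (axis v 1) i j k l * F i j k l) = F p q u v"
proof -
  have "outer4 (axis p 1) (axis q 1) (axis u 1) (axis v 1) i j k l * F i j k l
      = (if l = v then if k = u then if j = q then if i = p then F i j k l else 0 else 0 else 0 else 0)"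
    for i j k l
    by (simp add: outer4_def axis_def)
  then show ?thesis by (simp add: sum.delta' cong: if_cong)
qed

lemma cvec_cnj_axis_1: "cvec_cnj (axis s (1::complex)) = axis s 1"
  by (simp add: cvec_cnj_def axis_def vec_eq_iff)

definition sstt_tensor :: "'n \<Rightarrow> 'n \<Rightarrow> ('n::finite) tensor4" where
  "sstt_tensor s t = tadd (outer4 (axis s 1) (axis s 1) (axis t 1) (axis t 1))
                          (outer4 (axis t 1) (axis t 1) (axis s 1) (axis s 1))"

lemma sstt_tensor_hermitian_form:
  fixes X :: "'n::finite \<Rightarrow> 'n \<Rightarrow> complex"
  shows "(\<Sum>i\<in>UNIV. \<Sum>j\<in>UNIV. \<Sum>k\<in>UNIV. \<Sum>l\<in>UNIV. sstt_tensor s t i j k l * X i j * cnj (X k l))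
    = of_real (2 * Re (X s s * cnj (X t t)))"
proof -
  have "(\<Sum>i\<in>UNIV. \<Sum>j\<in>UNIV. \<Sum>k\<in>UNIV. \<Sum>l\<in>UNIV. sstt_tensor s t i j k l * X i j * cnj (X k l))
      = X s s * cnj (X t t) + X t t * cnj (X s s)"
    unfolding sstt_tensor_def tadd_def distrib_right sum.distrib mult.assoc sum_outer4_axis ..
  also have "\<dots> = of_real (2 * Re (X s s * cnj (X t t)))"
    by (simp add: complex_eq_iff)
  finally show ?thesis .
qed

lemma sstt_tensor_cps_sum_Re_mult_cnj:
  assumes "s \<noteq> t" and E: "sstt_tensor s t = cps_sum lam a r"
  shows "(\<Sum>m<r. lam m * (cmod ((a m $ s)\<^sup>2 * x + a m $ s * a m $ t * w + (a m $ t)\<^sup>2 * y))\<^sup>2)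
    = 2 * Re (x * cnj y)"
proof -
  define X where "X i j = (if i = s \<and> j = s then x else if i = s \<and> j = t then w
      else if i = t \<and> j = t then y else 0)" for i j
  have "a m $ i * a m $ j * X i j = (if j = s then if i = s then (a m $ s)\<^sup>2 * x else 0 else 0)
      + (if j = t then if i = s then a m $ s * a m $ t * w else 0 else 0)
      + (if j = t then if i = t then (a m $ t)\<^sup>2 * y else 0 else 0)" for m i j
    using assms(1) unfolding X_def by (simp add: power2_eq_square)
  then have "(\<Sum>i\<in>UNIV. \<Sum>j\<in>UNIV. a m $ i * a m $ j * X i j)
      = (a m $ s)\<^sup>2 * x + a m $ s * a m $ t * w + (a m $ t)\<^sup>2 * y" for m
    by (simp add: sum.distrib sum.delta')
  moreover have "X s s = x" "X t t = y"
    using assms(1) unfolding X_def by auto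
  ultimately show ?thesis
    using cps_sum_hermitian_form[of lam a r X] sstt_tensor_hermitian_form[of s t X]
    unfolding E by (simp only: of_real_eq_iff)
qed

lemma sstt_tensor_not_cps_sum_3:
  assumes "s \<noteq> t"
  shows "\<not> has_cps_decomp (sstt_tensor s t) 3"
proof
  assume "has_cps_decomp (sstt_tensor s t) 3"
  then obtain lam a where E: "sstt_tensor s t = cps_sum lam a 3"
    unfolding has_cps_decomp_def by blast
  define \<alpha> where "\<alpha> m = a m $ s" for m
  define \<beta> where "\<beta> m = a m $ t" for m
  have form: "(\<Sum>m<3. lam m * (cmod (\<alpha> m ^ 2 * x + \<alpha> m * \<beta> m * w + \<beta> m ^ 2 * y))\<^sup>2) = 2 * Re (x * cnj y)"
    for x w y
    unfolding \<alpha>_def \<beta>_def by (rule sstt_tensor_cps_sum_Re_mult_cnj[OF assms E])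
  obtain k where "k < 3" "(\<forall>m<3. m \<noteq> k \<longrightarrow> lam m \<le> 0) \<or> (\<forall>m<3. m \<noteq> k \<longrightarrow> 0 \<le> lam m)"
    using three_reals_two_share_sign by blast
  then show False
  proof (elim disjE)
    assume "\<forall>m<3. m \<noteq> k \<longrightarrow> lam m \<le> 0"
    then show False
      using rank_one_sum_one_positive_ne_Re_mult_cnj[of 2 k 3 lam \<alpha> \<beta>] \<open>k < 3\<close> form by force
  next
    assume "\<forall>m<3. m \<noteq> k \<longrightarrow> 0 \<le> lam m"
    moreover have "(\<Sum>m<3. - lam m * (cmod (\<alpha> m ^ 2 * x + \<alpha> m * \<beta> m * w + \<beta> m ^ 2 * y))\<^sup>2) = -2 * Re (x * cnj y)"
      for x w y
      using form[of x w y] by (simp add: sum_negf)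
    ultimately show False
      using rank_one_sum_one_positive_ne_Re_mult_cnj[of "-2" k 3 "\<lambda>m. - lam m" \<alpha> \<beta>] \<open>k < 3\<close> by force
  qed
qed

lemma sstt_tensor_eq_pow_combination:
  assumes "s \<noteq> t"
  shows "sstt_tensor s t = tscale (1/4)
    (tadd (tadd (pow4 (axis s 1 + axis t 1)) (pow4 (axis s 1 - axis t 1)))
          (tadd (tscale (-1) (pow22 (axis s 1 + \<i> *s axis t 1) (axis s 1 - \<i> *s axis t 1)))
                (tscale (-1) (pow22 (axis s 1 - \<i> *s axis t 1) (axis s 1 + \<i> *s axis t 1)))))"
  using assms unfolding sstt_tensor_def tadd_def tscale_def pow4_def pow22_def outer4_def
  by (intro ext) (simp add: axis_def; simp add: algebra_simps)

lemma sstt_tensor_eq_cps_sum: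
  assumes "s \<noteq> t"
  shows "sstt_tensor s t = cps_sum (\<lambda>m. [1/4, 1/4, -1/4, -1/4] ! m)
    (\<lambda>m. [axis s 1 + axis t 1, axis s 1 - axis t 1, axis s 1 + \<i> *s axis t 1, axis s 1 - \<i> *s axis t 1] ! m) 4"
  using assms unfolding sstt_tensor_def cps_sum_def cvec_cnj_def tadd_def outer4_def
  by (intro ext) (simp add: numeral_eq_Suc axis_def; simp add: algebra_simps)

lemma cps_rank_sstt_tensor:
  assumes "s \<noteq> t"
  shows "cps_rank (sstt_tensor s t) = 4"
  using sstt_tensor_eq_cps_sum[OF assms] sstt_tensor_not_cps_sum_3[OF assms]
  by (intro cps_rank_eqI) (auto simp: has_cps_decomp_def)

theorem proposition3p1:
  fixes s t :: "'n::finite"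
  assumes "CARD('n) \<ge> 2"
  defines "e \<equiv> (\<lambda>q::'n. axis q (1::complex))"
  defines "E \<equiv> tadd (outer4 (e s) (e s) (e t) (e t)) (outer4 (e t) (e t) (e s) (e s))"
  shows "cps_rank (pow4 (e s)) = 1 \<and>
    (s \<noteq> t \<longrightarrow> cps_rank E = 4 \<and>
       E = tscale (1/4)
           (tadd (tadd (pow4 (e s + e t)) (pow4 (e s - e t)))
                 (tadd (tscale (-1) (pow22 (e s + \<i> *s e t) (e s - \<i> *s e t)))
                       (tscale (-1) (pow22 (e s - \<i> *s e t) (e s + \<i> *s e t))))) \<and>
       is_cps_rank_decomp E
           (\<lambda>m. [1/4, 1/4, -1/4, -1/4] ! m)
           (\<lambda>m. [e s + e t, e s - e t, e s + \<i> *s e t, e s - \<i> *s e t] ! m) 4)"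
proof -
  have E_sstt: "E = sstt_tensor s t"
    unfolding E_def e_def sstt_tensor_def ..
  show ?thesis
    unfolding E_sstt e_def is_cps_rank_decomp_def
  proof (intro conjI impI)
    show "cps_rank (pow4 (axis s 1)) = 1"
      by (rule cps_rank_pow4) (simp_all add: cvec_cnj_axis_1 axis_eq_0_iff)
  qed (metis cps_rank_sstt_tensor sstt_tensor_eq_pow_combination sstt_tensor_eq_cps_sum)+
qed

end
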